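(* Let $\alpha\in(1,\infty)$, let $p_{Y\mid X}$ be a channel between finite sets $\mathcal X,\mathcal Y$, and for a distribution $p_X$ on $\mathcal X$, a joint distribution $\tilde q_{X,Y}$ on $\mathcal X\times\mathcal Y$ with $X$-marginal $\tilde q_X$, and a reverse channel $r_{X\mid Y}$, define $$\tilde F_\alpha^{\mathrm{LP}}(p_X,\tilde q_{X,Y},r_{X\mid Y}):=\frac{\alpha}{1-\alpha}D(\tilde q_{X,Y}\|\tilde q_Xp_{Y\mid X})+\mathbb E^{\tilde q_{X,Y}}\!\left[\log\frac{r_{X\mid Y}(X\mid Y)}{\tilde q_X(X)}\right]+\frac{\alpha}{1-\alpha}D(\tilde q_X\|p_X).$$ Then: (1) for fixed $(p_X,\tilde q_{X,Y})$, it is maximized over $r_{X\mid Y}$ by $r^*_{X\mid Y}(x\mid y)=\tilde q_{X,Y}(x,y)/\sum_{x'}\tilde q_{X,Y}(x',y)$; (2) for fixed $(\tilde q_{X,Y},r_{X\mid Y})$, it is maximized over $p_X$ by $p_X^*(x)=\sum_y\tilde q_{X,Y}(x,y)$; (3) for fixed $(p_X,r_{X\mid Y})$, it is maximized over $\tilde q_{X,Y}$ by $\tilde q^*_{X,Y}(x,y)=\hat q_X(x)\hat q_{Y\mid X}(y\mid x)$, where $$\hat q_X(x)=\frac{p_X(x)^{\frac{\alpha}{2\alpha-1}}\big(\sum_yp_{Y\mid X}(y\mid x)r_{X\mid Y}(x\mid y)^{1-\frac1\alpha}\big)^{\frac{\alpha}{2\alpha-1}}}{\sum_{x'}p_X(x')^{\frac{\alpha}{2\alpha-1}}\big(\sum_yp_{Y\mid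 X}(y\mid x')r_{X\mid Y}(x'\mid y)^{1-\frac1\alpha}\big)^{\frac{\alpha}{2\alpha-1}}},\qquad \hat q_{Y\mid X}(y\mid x)=\frac{p_{Y\mid X}(y\mid x)r_{X\mid Y}(x\mid y)^{1-\frac1\alpha}}{\sum_{x'}p_{Y\mid X}(y\mid x')r_{X\mid Y}(x'\mid y)^{1-\frac1\alpha}}.$$
   Context: $\log$ is natural and $D$ is the Kullback–Leibler divergence. A reverse channel $r_{X\mid Y}$ is a family $\{r_{X\mid Y}(\cdot\mid y)\}_{y\in\mathcal Y}$ of distributions on $\mathcal X$. *)

theory Defs
  imports Complex_Main "HOL-Library.Extended_Real"
begin

definition pdist :: "('a::finite \<Rightarrow> real) \<Rightarrow> bool" where
  "pdist P \<longleftrightarrow> (\<forall>a. 0 \<le> P a) \<and> (\<Sum>a\<in>UNIV. P a) = 1"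

text \<open>A channel: a family of distributions indexed by the input.
  For the forward channel, W x y = p(y|x); for a reverse channel, r y x = r(x|y).\<close>
definition channel :: "('a \<Rightarrow> 'b::finite \<Rightarrow> real) \<Rightarrow> bool" where
  "channel W \<longleftrightarrow> (\<forall>a. pdist (W a))"

definition joint_pdist :: "('a::finite \<Rightarrow> 'b::finite \<Rightarrow> real) \<Rightarrow> bool" where
  "joint_pdist q \<longleftrightarrow> (\<forall>x y. 0 \<le> q x y) \<and> (\<Sum>x\<in>UNIV. \<Sum>y\<in>UNIV. q x y) = 1"

definition xmarg :: "('a \<Rightarrow> 'b::finite \<Rightarrow> real) \<Rightarrow> 'a \<Rightarrow> real" where
  "xmarg q x = (\<Sum>y\<in>UNIV. q x y)"

definition ymarg :: "('a::finite \<Rightarrow> 'b \<Rightarrow> real) \<Rightarrow> 'b \<Rightarrow> real" where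
  "ymarg q y = (\<Sum>x\<in>UNIV. q x y)"

definition kl_term :: "real \<Rightarrow> real \<Rightarrow> ereal" where
  "kl_term a b = (if a = 0 then 0 else if b = 0 then \<infinity> else ereal (a * ln (a / b)))"

definition KL :: "('a::finite \<Rightarrow> real) \<Rightarrow> ('a \<Rightarrow> real) \<Rightarrow> ereal" where
  "KL P Q = (\<Sum>a\<in>UNIV. kl_term (P a) (Q a))"

definition exp_log_term :: "('a::finite \<Rightarrow> 'b::finite \<Rightarrow> real) \<Rightarrow> ('b \<Rightarrow> 'a \<Rightarrow> real) \<Rightarrow> ereal" where
  "exp_log_term q r = (\<Sum>x\<in>UNIV. \<Sum>y\<in>UNIV.
      (if q x y = 0 then 0 else if r y x = 0 then -\<infinity>
       else ereal (q x y * ln (r y x / xmarg q x))))"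

definition F_LP :: "real \<Rightarrow> ('a::finite \<Rightarrow> 'b::finite \<Rightarrow> real) \<Rightarrow> ('a \<Rightarrow> real)
    \<Rightarrow> ('a \<Rightarrow> 'b \<Rightarrow> real) \<Rightarrow> ('b \<Rightarrow> 'a \<Rightarrow> real) \<Rightarrow> ereal" where
  "F_LP \<alpha> W p q r =
     ereal (\<alpha> / (1 - \<alpha>)) * KL (\<lambda>(x, y). q x y) (\<lambda>(x, y). xmarg q x * W x y)
     + exp_log_term q r
     + ereal (\<alpha> / (1 - \<alpha>)) * KL (xmarg q) p"

definition Zc :: "real \<Rightarrow> ('a \<Rightarrow> 'b::finite \<Rightarrow> real) \<Rightarrow> ('b \<Rightarrow> 'a \<Rightarrow> real) \<Rightarrow> 'a \<Rightarrow> real" where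
  "Zc \<alpha> W r x = (\<Sum>y\<in>UNIV. W x y * r y x powr (1 - 1 / \<alpha>))"

definition qhatX_num :: "real \<Rightarrow> ('a \<Rightarrow> 'b::finite \<Rightarrow> real) \<Rightarrow> ('a \<Rightarrow> real) \<Rightarrow> ('b \<Rightarrow> 'a \<Rightarrow> real) \<Rightarrow> 'a \<Rightarrow> real" where
  "qhatX_num \<alpha> W p r x = p x powr (\<alpha> / (2 * \<alpha> - 1)) * Zc \<alpha> W r x powr (\<alpha> / (2 * \<alpha> - 1))"

definition qhatX :: "real \<Rightarrow> ('a::finite \<Rightarrow> 'b::finite \<Rightarrow> real) \<Rightarrow> ('a \<Rightarrow> real) \<Rightarrow> ('b \<Rightarrow> 'a \<Rightarrow> real) \<Rightarrow> 'a \<Rightarrow> real" where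
  "qhatX \<alpha> W p r x = qhatX_num \<alpha> W p r x / (\<Sum>x'\<in>UNIV. qhatX_num \<alpha> W p r x')"

definition qhatYX :: "real \<Rightarrow> ('a \<Rightarrow> 'b::finite \<Rightarrow> real) \<Rightarrow> ('b \<Rightarrow> 'a \<Rightarrow> real) \<Rightarrow> 'a \<Rightarrow> 'b \<Rightarrow> real" where
  "qhatYX \<alpha> W r x y = W x y * r y x powr (1 - 1 / \<alpha>) / Zc \<alpha> W r x"

definition qstar :: "real \<Rightarrow> ('a::finite \<Rightarrow> 'b::finite \<Rightarrow> real) \<Rightarrow> ('a \<Rightarrow> real) \<Rightarrow> ('b \<Rightarrow> 'a \<Rightarrow> real) \<Rightarrow> 'a \<Rightarrow> 'b \<Rightarrow> real" where
  "qstar \<alpha> W p r x y = qhatX \<alpha> W p r x * qhatYX \<alpha> W r x y"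

end

theory Submission
  imports Defs
begin

text \<open>Since \<open>\<alpha> > 1\<close> the weight \<open>\<alpha>/(1-\<alpha>)\<close> is negative, so the objective is either \<open>-\<infinity>\<close> or
  the finite sum of logarithms \<open>F_LP_real\<close>, and each part reduces to Gibbs' inequality
  \<open>\<Sum> P ln (P/Q) \<ge> \<Sum> P - \<Sum> Q\<close>.
  (1) Replacing \<open>r\<close> by the posterior \<open>q/q\<^sub>Y\<close> raises the middle term by the divergence of \<open>q\<close>
  from the distribution \<open>r q\<^sub>Y\<close>.
  (2) Only \<open>\<alpha>/(1-\<alpha>) D(q\<^sub>X\<parallel>p)\<close> depends on \<open>p\<close>, and it vanishes at \<open>p = q\<^sub>X\<close>.
  (3) Write \<open>b = \<alpha>/(\<alpha>-1)\<close> and \<open>S\<close> for the normaliser of \<open>qhatX\<close>. The exponents in \<open>qhatX\<close> and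
  \<open>qhatYX\<close> are chosen so that \<open>b ln qstar + ln qhatX = b ln (p W) + ln r - (1+b) ln S\<close>
  pointwise; hence \<open>F(q) = (1+b) ln S - b D(q\<parallel>qstar) - D(q\<^sub>X\<parallel>qhatX)\<close> for every \<open>q\<close> of finite
  objective, which is maximal at \<open>q = qstar\<close>.\<close>

lemma sum_ereal_eq_MInfty:
  fixes f :: "'a \<Rightarrow> ereal"
  assumes "finite A" "a \<in> A" "f a = -\<infinity>" "\<forall>b\<in>A. f b \<noteq> \<infinity>"
  shows "sum f A = -\<infinity>"
proof -
  have "sum f A = f a + sum f (A - {a})" using assms by (simp add: sum.remove)
  moreover have "sum f (A - {a}) \<noteq> \<infinity>" using assms by (simp add: sum_Pinfty)
  ultimately show ?thesis using assms by simp
qed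

lemma sum_UNIV_pair:
  "(\<Sum>z\<in>(UNIV::('a::finite \<times> 'b::finite) set). f z) = (\<Sum>x\<in>UNIV. \<Sum>y\<in>UNIV. f (x, y))"
  by (simp add: sum.cartesian_product flip: UNIV_Times_UNIV)

definition relent :: "('a::finite \<Rightarrow> real) \<Rightarrow> ('a \<Rightarrow> real) \<Rightarrow> real" where
  "relent P Q = (\<Sum>a\<in>UNIV. P a * ln (P a / Q a))"

lemma relent_self [simp]: "relent P P = 0"
proof -
  have "P a * ln (P a / P a) = 0" for a by (cases "P a = 0") simp_all
  then show ?thesis unfolding relent_def by (intro sum.neutral) blast
qed

lemma relent_pair:
  "relent (\<lambda>(x, y). P x y) (\<lambda>(x, y). Q x y) = (\<Sum>x\<in>UNIV. \<Sum>y\<in>UNIV. P x y * ln (P x y / Q x y))"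
  by (simp add: relent_def sum_UNIV_pair)

lemma mult_ln_div_ge_diff:
  fixes a b :: real
  assumes "0 \<le> a" "0 \<le> b" "a \<noteq> 0 \<Longrightarrow> b \<noteq> 0"
  shows "a - b \<le> a * ln (a / b)"
proof (cases "a = 0")
  case False
  then have a: "0 < a" and b: "0 < b" using assms by auto
  have "ln (b / a) \<le> b / a - 1" using a b by (intro ln_le_minus_one) simp
  then have "a * (1 - b / a) \<le> a * ln (a / b)"
    using a b by (intro mult_left_mono) (auto simp: ln_div)
  then show ?thesis using a by (simp add: right_diff_distrib)
qed (use assms in simp)

lemma relent_nonneg:
  assumes "\<And>a. 0 \<le> P a" "\<And>a. 0 \<le> Q a" "\<And>a. P a \<noteq> 0 \<Longrightarrow> Q a \<noteq> 0"
    and "sum Q UNIV \<le> sum P UNIV"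
  shows "0 \<le> relent P Q"
proof -
  have "sum P UNIV - sum Q UNIV \<le> relent P Q"
    unfolding relent_def sum_subtractf[symmetric]
    by (intro sum_mono mult_ln_div_ge_diff assms)
  then show ?thesis using assms(4) by linarith
qed

lemma KL_eq_relent:
  "KL P Q = (if \<exists>a. P a \<noteq> 0 \<and> Q a = 0 then \<infinity> else ereal (relent P Q))"
proof (cases "\<exists>a. P a \<noteq> 0 \<and> Q a = 0")
  case True
  then obtain a where "P a \<noteq> 0" "Q a = 0" by blast
  then have "kl_term (P a) (Q a) = \<infinity>" by (simp add: kl_term_def)
  then have "KL P Q = \<infinity>" unfolding KL_def by (subst sum_Pinfty) auto
  then show ?thesis using True by simp
next
  case False
  then have "kl_term (P a) (Q a) = ereal (P a * ln (P a / Q a))" for a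
    by (auto simp: kl_term_def)
  then show ?thesis using False by (simp add: KL_def relent_def)
qed

lemma KL_nonneg:
  assumes "pdist P" "pdist Q"
  shows "0 \<le> KL P Q"
  using assms by (auto simp: KL_eq_relent pdist_def intro!: relent_nonneg)

lemma channel_nonneg: "channel W \<Longrightarrow> 0 \<le> W x y"
  by (simp add: channel_def pdist_def)

lemma sum_channel: "channel W \<Longrightarrow> (\<Sum>y\<in>UNIV. W x y) = 1"
  by (simp add: channel_def pdist_def)

lemma joint_pdist_nonneg: "joint_pdist q \<Longrightarrow> 0 \<le> q x y"
  by (simp add: joint_pdist_def)

lemma xmarg_pos:
  assumes "joint_pdist q" "q x y \<noteq> 0"
  shows "0 < xmarg q x"
proof -
  have "q x y \<le> xmarg q x" unfolding xmarg_def
    by (rule member_le_sum) (auto intro: joint_pdist_nonneg[OF assms(1)])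
  then show ?thesis using assms joint_pdist_nonneg[OF assms(1), of x y] by linarith
qed

lemma ymarg_pos:
  assumes "joint_pdist q" "q x y \<noteq> 0"
  shows "0 < ymarg q y"
proof -
  have "q x y \<le> ymarg q y" unfolding ymarg_def
    by (rule member_le_sum) (auto intro: joint_pdist_nonneg[OF assms(1)])
  then show ?thesis using assms joint_pdist_nonneg[OF assms(1), of x y] by linarith
qed

lemma pdist_xmarg: "joint_pdist q \<Longrightarrow> pdist (xmarg q)"
  by (auto simp: pdist_def joint_pdist_def xmarg_def intro: sum_nonneg)

lemma exp_log_term_eq:
  "exp_log_term q r = (if \<exists>x y. q x y \<noteq> 0 \<and> r y x = 0 then -\<infinity>
     else ereal (\<Sum>x\<in>UNIV. \<Sum>y\<in>UNIV. q x y * ln (r y x / xmarg q x)))"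
proof (cases "\<exists>x y. q x y \<noteq> 0 \<and> r y x = 0")
  case True
  then obtain x\<^sub>0 y\<^sub>0 where bad: "q x\<^sub>0 y\<^sub>0 \<noteq> 0" "r y\<^sub>0 x\<^sub>0 = 0" by blast
  define g where "g x y = (if q x y = 0 then 0 else if r y x = 0 then -\<infinity>
     else ereal (q x y * ln (r y x / xmarg q x)))" for x y
  have "sum (g x) UNIV \<noteq> \<infinity>" for x by (simp add: sum_Pinfty g_def)
  moreover have "sum (g x\<^sub>0) UNIV = -\<infinity>"
    using bad by (intro sum_ereal_eq_MInfty[of _ y\<^sub>0]) (auto simp: g_def)
  ultimately have "(\<Sum>x\<in>UNIV. sum (g x) UNIV) = -\<infinity>"
    by (intro sum_ereal_eq_MInfty[of _ x\<^sub>0]) auto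
  then show ?thesis using True unfolding exp_log_term_def g_def by simp
next
  case False
  then have "(if q x y = 0 then 0 else if r y x = 0 then -\<infinity>
      else ereal (q x y * ln (r y x / xmarg q x))) = ereal (q x y * ln (r y x / xmarg q x))" for x y
    by auto
  then show ?thesis using False unfolding exp_log_term_def by simp
qed

definition abs_continuous ::
    "('a \<Rightarrow> 'b \<Rightarrow> real) \<Rightarrow> ('a \<Rightarrow> real) \<Rightarrow> ('a \<Rightarrow> 'b::finite \<Rightarrow> real)
      \<Rightarrow> ('b \<Rightarrow> 'a \<Rightarrow> real) \<Rightarrow> bool"
  where "abs_continuous W p q r \<longleftrightarrow>
    (\<forall>x y. q x y \<noteq> 0 \<longrightarrow> W x y \<noteq> 0 \<and> r y x \<noteq> 0) \<and> (\<forall>x. xmarg q x \<noteq> 0 \<longrightarrow> p x \<noteq> 0)"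

definition F_LP_real :: "real \<Rightarrow> ('a::finite \<Rightarrow> 'b::finite \<Rightarrow> real) \<Rightarrow> ('a \<Rightarrow> real)
    \<Rightarrow> ('a \<Rightarrow> 'b \<Rightarrow> real) \<Rightarrow> ('b \<Rightarrow> 'a \<Rightarrow> real) \<Rightarrow> real" where
  "F_LP_real \<alpha> W p q r =
     \<alpha> / (1 - \<alpha>) * relent (\<lambda>(x, y). q x y) (\<lambda>(x, y). xmarg q x * W x y)
     + (\<Sum>x\<in>UNIV. \<Sum>y\<in>UNIV. q x y * ln (r y x / xmarg q x))
     + \<alpha> / (1 - \<alpha>) * relent (xmarg q) p"

lemma F_LP_eq_real:
  assumes "1 < \<alpha>" "joint_pdist q"
  shows "F_LP \<alpha> W p q r = (if abs_continuous W p q r then ereal (F_LP_real \<alpha> W p q r) else -\<infinity>)"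
proof -
  have "\<alpha> / (1 - \<alpha>) < 0" using assms(1) by (simp add: divide_pos_neg)
  moreover have "(\<exists>z. (\<lambda>(x, y). q x y) z \<noteq> 0 \<and> (\<lambda>(x, y). xmarg q x * W x y) z = 0)
      \<longleftrightarrow> (\<exists>x y. q x y \<noteq> 0 \<and> W x y = 0)"
    using xmarg_pos[OF assms(2)] by fastforce
  ultimately show ?thesis
    unfolding F_LP_def F_LP_real_def KL_eq_relent exp_log_term_eq abs_continuous_def
    by (auto simp: ereal_mult_infty)
qed

lemma exp_log_term_le_posterior:
  assumes q: "joint_pdist q" and r: "channel r"
    and rs: "\<forall>y x. ymarg q y \<noteq> 0 \<longrightarrow> rs y x = q x y / ymarg q y"
  shows "exp_log_term q r \<le> exp_log_term q rs"
proof (cases "\<exists>x y. q x y \<noteq> 0 \<and> r y x = 0")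
  case False
  have r_pos: "0 < r y x" if "q x y \<noteq> 0" for x y
    using False that channel_nonneg[OF r, of y x] by force
  have rs_pos: "0 < rs y x" if "q x y \<noteq> 0" for x y
    using that rs ymarg_pos[OF q that] joint_pdist_nonneg[OF q, of x y] by simp
  have diff: "q x y * ln (rs y x / xmarg q x) - q x y * ln (r y x / xmarg q x)
      = q x y * ln (q x y / (r y x * ymarg q y))" for x y
  proof (cases "q x y = 0")
    case False
    have "0 < q x y" using False joint_pdist_nonneg[OF q, of x y] by simp
    then show ?thesis
      using rs r_pos[OF False] rs_pos[OF False] xmarg_pos[OF q False] ymarg_pos[OF q False]
      by (simp add: ln_divide_pos ln_mult_pos right_diff_distrib)
        (simp add: algebra_simps)
  qed simp
  have "(\<Sum>z\<in>UNIV. (\<lambda>(x, y). r y x * ymarg q y) z) = (\<Sum>x\<in>UNIV. \<Sum>y\<in>UNIV. r y x * ymarg q y)"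
    by (simp add: sum_UNIV_pair)
  also have "\<dots> = (\<Sum>y\<in>UNIV. \<Sum>x\<in>UNIV. r y x * ymarg q y)" by (rule sum.swap)
  also have "\<dots> = (\<Sum>x\<in>UNIV. \<Sum>y\<in>UNIV. q x y)"
    by (simp add: sum_channel[OF r] ymarg_def flip: sum_distrib_right) (rule sum.swap)
  also have "\<dots> = (\<Sum>z\<in>UNIV. (\<lambda>(x, y). q x y) z)" by (simp add: sum_UNIV_pair)
  finally have mass: "(\<Sum>z\<in>UNIV. (\<lambda>(x, y). r y x * ymarg q y) z) = (\<Sum>z\<in>UNIV. (\<lambda>(x, y). q x y) z)" .
  have supp: "r y x \<noteq> 0" "ymarg q y \<noteq> 0" if "q x y \<noteq> 0" for x y
    using r_pos[OF that] ymarg_pos[OF q that] by simp_all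
  have "0 \<le> ymarg q y" for y
    using joint_pdist_nonneg[OF q] by (simp add: ymarg_def sum_nonneg)
  then have "0 \<le> relent (\<lambda>(x, y). q x y) (\<lambda>(x, y). r y x * ymarg q y)"
    using mass supp joint_pdist_nonneg[OF q] channel_nonneg[OF r]
    by (intro relent_nonneg) auto
  then have "(\<Sum>x\<in>UNIV. \<Sum>y\<in>UNIV. q x y * ln (r y x / xmarg q x))
      \<le> (\<Sum>x\<in>UNIV. \<Sum>y\<in>UNIV. q x y * ln (rs y x / xmarg q x))"
    by (simp add: relent_pair flip: diff) (simp add: sum_subtractf)
  moreover have "\<not> (\<exists>x y. q x y \<noteq> 0 \<and> rs y x = 0)" using rs_pos by force
  ultimately show ?thesis using False by (simp add: exp_log_term_eq)
qed (simp add: exp_log_term_eq)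

lemma F_LP_le_xmarg:
  assumes "1 < \<alpha>" "joint_pdist q" "pdist p"
  shows "F_LP \<alpha> W p q r \<le> F_LP \<alpha> W (xmarg q) q r"
proof -
  have "\<alpha> / (1 - \<alpha>) < 0" using assms(1) by (simp add: divide_pos_neg)
  moreover have "0 \<le> KL (xmarg q) p" using assms by (intro KL_nonneg pdist_xmarg)
  moreover have "ereal c * K \<le> 0" if "c < 0" "0 \<le> K" for c K
    using that by (cases K) (auto simp: mult_nonpos_nonneg)
  ultimately have "ereal (\<alpha> / (1 - \<alpha>)) * KL (xmarg q) p \<le> 0"
    by blast
  then have "A + ereal (\<alpha> / (1 - \<alpha>)) * KL (xmarg q) p \<le> A" for A
    using add_left_mono[of _ 0 A] by simp
  moreover have "KL (xmarg q) (xmarg q) = 0" by (simp add: KL_eq_relent)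
  ultimately show ?thesis unfolding F_LP_def by simp
qed

lemma Zc_pos:
  assumes "channel W" "0 < W x y" "0 < r y x"
  shows "0 < Zc \<alpha> W r x"
proof -
  have "W x y * r y x powr (1 - 1 / \<alpha>) \<le> Zc \<alpha> W r x" unfolding Zc_def
    by (rule member_le_sum) (auto intro!: mult_nonneg_nonneg simp: channel_nonneg[OF assms(1)])
  moreover have "0 < W x y * r y x powr (1 - 1 / \<alpha>)" using assms by simp
  ultimately show ?thesis by linarith
qed

lemma qhatX_nonneg: "0 \<le> qhatX \<alpha> W p r x"
  unfolding qhatX_def qhatX_num_def by (intro divide_nonneg_nonneg sum_nonneg) auto

lemma qstar_nonneg: "channel W \<Longrightarrow> 0 \<le> qstar \<alpha> W p r x y"
  unfolding qstar_def qhatYX_def Zc_def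
  by (intro mult_nonneg_nonneg divide_nonneg_nonneg qhatX_nonneg sum_nonneg)
     (auto simp: channel_nonneg)

lemma qstar_pos:
  assumes W: "channel W" and S: "0 < (\<Sum>x\<in>UNIV. qhatX_num \<alpha> W p r x)"
    and pos: "0 < W x y" "0 < r y x" "0 < p x"
  shows "0 < qhatX \<alpha> W p r x" "0 < qhatYX \<alpha> W r x y" "0 < qstar \<alpha> W p r x y"
proof -
  have Z: "0 < Zc \<alpha> W r x" using W pos(1,2) by (rule Zc_pos)
  then show hX: "0 < qhatX \<alpha> W p r x"
    using S pos(3) by (simp add: qhatX_def qhatX_num_def)
  show hY: "0 < qhatYX \<alpha> W r x y"
    using Z pos by (simp add: qhatYX_def)
  show "0 < qstar \<alpha> W p r x y" using hX hY by (simp add: qstar_def)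
qed

lemma xmarg_qstar: "xmarg (qstar \<alpha> W p r) = qhatX \<alpha> W p r"
proof
  fix x
  show "xmarg (qstar \<alpha> W p r) x = qhatX \<alpha> W p r x"
  proof (cases "Zc \<alpha> W r x = 0")
    case True
    then show ?thesis by (simp add: xmarg_def qstar_def qhatX_def qhatX_num_def)
  next
    case False
    then have "(\<Sum>y\<in>UNIV. qhatYX \<alpha> W r x y) = 1"
      by (simp add: qhatYX_def Zc_def flip: sum_divide_distrib)
    then show ?thesis by (simp add: xmarg_def qstar_def flip: sum_distrib_left)
  qed
qed

lemma sum_qhatX:
  "0 < (\<Sum>x\<in>UNIV. qhatX_num \<alpha> W p r x) \<Longrightarrow> (\<Sum>x\<in>UNIV. qhatX \<alpha> W p r x) = 1"
  by (simp add: qhatX_def flip: sum_divide_distrib)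

lemma joint_pdist_qstar:
  assumes "channel W" "0 < (\<Sum>x\<in>UNIV. qhatX_num \<alpha> W p r x)"
  shows "joint_pdist (qstar \<alpha> W p r)"
  using sum_qhatX[OF assms(2)] qstar_nonneg[OF assms(1)] xmarg_qstar[of \<alpha> W p r]
  by (simp add: joint_pdist_def xmarg_def fun_eq_iff)

lemma abs_continuous_qstar: "channel W \<Longrightarrow> abs_continuous W p (qstar \<alpha> W p r) r"
  by (auto simp: abs_continuous_def xmarg_qstar qstar_def qhatYX_def qhatX_def qhatX_num_def)

lemma ln_qstar_identity:
  assumes \<alpha>: "1 < \<alpha>" and W: "channel W" and S: "0 < (\<Sum>x\<in>UNIV. qhatX_num \<alpha> W p r x)"
    and pos: "0 < W x y" "0 < r y x" "0 < p x"
  shows "\<alpha>/(\<alpha>-1) * ln (qstar \<alpha> W p r x y) + ln (qhatX \<alpha> W p r x)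
    = \<alpha>/(\<alpha>-1) * ln (p x * W x y) + ln (r y x) - (1 + \<alpha>/(\<alpha>-1)) * ln (\<Sum>x\<in>UNIV. qhatX_num \<alpha> W p r x)"
proof -
  define b g e where "b = \<alpha>/(\<alpha>-1)" and "g = \<alpha>/(2*\<alpha>-1)" and "e = 1 - 1/\<alpha>"
  define S Z where "S = (\<Sum>x\<in>UNIV. qhatX_num \<alpha> W p r x)" and "Z = Zc \<alpha> W r x"
  have "1 + b = (2*\<alpha>-1)/(\<alpha>-1)" using \<alpha> by (simp add: b_def field_simps)
  then have bg: "(1 + b) * g = b" using \<alpha> by (simp add: b_def g_def)
  have be: "b * e = 1" using \<alpha> by (simp add: b_def e_def field_simps)
  have Z: "0 < Z" unfolding Z_def using W pos(1,2) by (rule Zc_pos)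
  have hX: "ln (qhatX \<alpha> W p r x) = g * ln (p x) + g * ln Z - ln S"
    using Z S pos by (simp add: qhatX_def qhatX_num_def ln_divide_pos ln_mult_pos ln_powr g_def S_def Z_def)
  have hY: "ln (qhatYX \<alpha> W r x y) = ln (W x y) + e * ln (r y x) - ln Z"
    using Z pos by (simp add: qhatYX_def ln_divide_pos ln_mult_pos ln_powr e_def Z_def)
  have "b * ln (qstar \<alpha> W p r x y) + ln (qhatX \<alpha> W p r x)
      = (1 + b) * ln (qhatX \<alpha> W p r x) + b * ln (qhatYX \<alpha> W r x y)"
    using qstar_pos[OF W S pos] by (simp add: qstar_def ln_mult_pos algebra_simps)
  also have "\<dots> = ((1 + b) * g) * ln (p x) + ((1 + b) * g) * ln Z - (1 + b) * ln S
      + b * ln (W x y) + (b * e) * ln (r y x) - b * ln Z"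
    unfolding hX hY by (simp add: algebra_simps)
  also have "\<dots> = b * ln (p x * W x y) + ln (r y x) - (1 + b) * ln S"
    unfolding bg be using pos by (simp add: ln_mult_pos algebra_simps)
  finally show ?thesis by (simp add: b_def S_def)
qed

lemma xmarg_mult: "xmarg q x * c = (\<Sum>y\<in>UNIV. q x y * c)"
  by (simp add: xmarg_def sum_distrib_right)

lemma F_LP_real_decomposition:
  assumes \<alpha>: "1 < \<alpha>" and W: "channel W" and p: "pdist p" and r: "channel r"
    and q: "joint_pdist q" and ac: "abs_continuous W p q r" and S: "0 < (\<Sum>x\<in>UNIV. qhatX_num \<alpha> W p r x)"
  shows "F_LP_real \<alpha> W p q r = (1 + \<alpha>/(\<alpha>-1)) * ln (\<Sum>x\<in>UNIV. qhatX_num \<alpha> W p r x)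
    - \<alpha>/(\<alpha>-1) * relent (\<lambda>(x, y). q x y) (\<lambda>(x, y). qstar \<alpha> W p r x y)
    - relent (xmarg q) (qhatX \<alpha> W p r)"
proof -
  define b where "b = \<alpha>/(\<alpha>-1)"
  define S where "S = (\<Sum>x\<in>UNIV. qhatX_num \<alpha> W p r x)"
  define qs qX where "qs = qstar \<alpha> W p r" and "qX = xmarg q"
  have coeff: "\<alpha>/(1-\<alpha>) = -b" using \<alpha> by (simp add: b_def field_simps)
  have pointwise: "- b * (q x y * ln (q x y / (qX x * W x y))) + q x y * ln (r y x / qX x)
      - b * (q x y * ln (qX x / p x))
    = q x y * ((1 + b) * ln S) - b * (q x y * ln (q x y / qs x y)) - q x y * ln (qX x / qhatX \<alpha> W p r x)"
    for x y
  proof (cases "q x y = 0")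
    case False
    have pos: "0 < q x y" "0 < qX x" "0 < W x y" "0 < r y x" "0 < p x"
      using False ac joint_pdist_nonneg[OF q, of x y] xmarg_pos[OF q False]
        channel_nonneg[OF W, of x y] channel_nonneg[OF r, of y x] p
      by (auto simp: qX_def abs_continuous_def pdist_def order_le_neq_trans)
    note identity = ln_qstar_identity[OF \<alpha> W S pos(3-5), folded b_def S_def qs_def]
    have "0 < qs x y" "0 < qhatX \<alpha> W p r x"
      using qstar_pos[OF W S pos(3-5)] by (simp_all add: qs_def)
    then have logs: "ln (q x y / (qX x * W x y)) = ln (q x y) - (ln (qX x) + ln (W x y))"
        "ln (r y x / qX x) = ln (r y x) - ln (qX x)" "ln (qX x / p x) = ln (qX x) - ln (p x)"
        "ln (q x y / qs x y) = ln (q x y) - ln (qs x y)"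
        "ln (qX x / qhatX \<alpha> W p r x) = ln (qX x) - ln (qhatX \<alpha> W p r x)"
      using pos by (simp_all add: ln_divide_pos ln_mult_pos)
    have hX: "ln (qhatX \<alpha> W p r x)
        = b * ln (p x * W x y) + ln (r y x) - (1 + b) * ln S - b * ln (qs x y)"
      using identity by linarith
    show ?thesis unfolding logs hX using pos by (simp add: ln_mult_pos algebra_simps)
  qed simp
  have "F_LP_real \<alpha> W p q r = (\<Sum>x\<in>UNIV. \<Sum>y\<in>UNIV. - b * (q x y * ln (q x y / (qX x * W x y)))
      + q x y * ln (r y x / qX x) - b * (q x y * ln (qX x / p x)))"
  proof -
    have "relent (xmarg q) p = (\<Sum>x\<in>UNIV. \<Sum>y\<in>UNIV. q x y * ln (qX x / p x))"
      by (simp add: relent_def qX_def xmarg_mult)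
    then show ?thesis
      by (simp add: F_LP_real_def relent_pair coeff qX_def sum.distrib sum_subtractf sum_negf
          sum_distrib_left)
  qed
  also have "\<dots> = (\<Sum>x\<in>UNIV. \<Sum>y\<in>UNIV. q x y * ((1 + b) * ln S) - b * (q x y * ln (q x y / qs x y))
      - q x y * ln (qX x / qhatX \<alpha> W p r x))"
    by (simp only: pointwise)
  also have "\<dots> = (\<Sum>x\<in>UNIV. \<Sum>y\<in>UNIV. q x y) * ((1 + b) * ln S)
      - b * (\<Sum>x\<in>UNIV. \<Sum>y\<in>UNIV. q x y * ln (q x y / qs x y))
      - (\<Sum>x\<in>UNIV. \<Sum>y\<in>UNIV. q x y * ln (qX x / qhatX \<alpha> W p r x))"
    by (simp add: sum_subtractf sum_distrib_left sum_distrib_right)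
  also have "\<dots> = (1 + b) * ln S - b * relent (\<lambda>(x, y). q x y) (\<lambda>(x, y). qs x y)
      - relent qX (qhatX \<alpha> W p r)"
    unfolding relent_pair using q by (simp add: joint_pdist_def relent_def qX_def xmarg_mult)
  finally show ?thesis by (simp add: b_def S_def qs_def qX_def)
qed

lemma F_LP_le_qstar:
  assumes \<alpha>: "1 < \<alpha>" and W: "channel W" and p: "pdist p" and r: "channel r"
    and q: "joint_pdist q" and S: "0 < (\<Sum>x\<in>UNIV. qhatX_num \<alpha> W p r x)"
  shows "F_LP \<alpha> W p q r \<le> F_LP \<alpha> W p (qstar \<alpha> W p r) r"
proof (cases "abs_continuous W p q r")
  case True
  define b where "b = \<alpha>/(\<alpha>-1)"
  define qs where "qs = qstar \<alpha> W p r"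
  have qs: "joint_pdist qs" using joint_pdist_qstar[OF W S] by (simp add: qs_def)
  have qs_ac: "abs_continuous W p qs r" using abs_continuous_qstar[OF W] by (simp add: qs_def)
  have supp: "qs x y \<noteq> 0" "qhatX \<alpha> W p r x \<noteq> 0" if "q x y \<noteq> 0" for x y
  proof -
    have "0 < W x y" "0 < r y x" "0 < p x"
      using True that xmarg_pos[OF q that] channel_nonneg[OF W, of x y] channel_nonneg[OF r, of y x] p
      by (auto simp: abs_continuous_def pdist_def less_le)
    from qstar_pos[OF W S this] show "qs x y \<noteq> 0" "qhatX \<alpha> W p r x \<noteq> 0"
      by (simp_all add: qs_def)
  qed
  have "0 \<le> relent (\<lambda>(x, y). q x y) (\<lambda>(x, y). qs x y)"
    using q qs supp joint_pdist_nonneg[OF q] joint_pdist_nonneg[OF qs]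
    by (intro relent_nonneg) (auto simp: sum_UNIV_pair joint_pdist_def)
  moreover have "0 \<le> relent (xmarg q) (qhatX \<alpha> W p r)"
    using pdist_xmarg[OF q] supp sum_qhatX[OF S] qhatX_nonneg
    by (intro relent_nonneg) (auto simp: pdist_def xmarg_def dest: sum.not_neutral_contains_not_neutral)
  moreover have "0 < b" using \<alpha> by (simp add: b_def)
  ultimately have "0 \<le> b * relent (\<lambda>(x, y). q x y) (\<lambda>(x, y). qs x y)"
    "0 \<le> relent (xmarg q) (qhatX \<alpha> W p r)" by simp_all
  then have "F_LP_real \<alpha> W p q r \<le> F_LP_real \<alpha> W p qs r"
    using F_LP_real_decomposition[OF \<alpha> W p r q True S]
      F_LP_real_decomposition[OF \<alpha> W p r qs qs_ac S]
    by (simp add: xmarg_qstar qs_def flip: b_def)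
  then show ?thesis
    using True qs_ac F_LP_eq_real[OF \<alpha> q] F_LP_eq_real[OF \<alpha> qs] by (simp add: qs_def)
qed (simp add: F_LP_eq_real[OF \<alpha> q])

theorem proposition6:
  fixes \<alpha> :: real
    and W :: "'x::finite \<Rightarrow> 'y::finite \<Rightarrow> real"
  assumes "\<alpha> > 1"
    and "channel W"
  shows
    "(\<forall>p q. pdist p \<and> joint_pdist q \<longrightarrow>
        (\<forall>rs. channel rs \<and> (\<forall>y x. ymarg q y \<noteq> 0 \<longrightarrow> rs y x = q x y / ymarg q y) \<longrightarrow>
           (\<forall>r. channel r \<longrightarrow> F_LP \<alpha> W p q r \<le> F_LP \<alpha> W p q rs)))
   \<and> (\<forall>q r. joint_pdist q \<and> channel r \<longrightarrow>
        pdist (xmarg q) \<and> (\<forall>p. pdist p \<longrightarrow> F_LP \<alpha> W p q r \<le> F_LP \<alpha> W (xmarg q) q r))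
   \<and> (\<forall>p r. pdist p \<and> channel r \<and> (\<Sum>x\<in>UNIV. qhatX_num \<alpha> W p r x) > 0 \<longrightarrow>
        joint_pdist (qstar \<alpha> W p r) \<and>
        (\<forall>q. joint_pdist q \<longrightarrow> F_LP \<alpha> W p q r \<le> F_LP \<alpha> W p (qstar \<alpha> W p r) r))"
proof (intro conjI allI impI; (elim conjE)?)
  fix p :: "'x \<Rightarrow> real" and q :: "'x \<Rightarrow> 'y \<Rightarrow> real" and rs r :: "'y \<Rightarrow> 'x \<Rightarrow> real"
  assume "joint_pdist q" "channel r" "\<forall>y x. ymarg q y \<noteq> 0 \<longrightarrow> rs y x = q x y / ymarg q y"
  then have "exp_log_term q r \<le> exp_log_term q rs" by (rule exp_log_term_le_posterior)
  then show "F_LP \<alpha> W p q r \<le> F_LP \<alpha> W p q rs" unfolding F_LP_def by (intro add_mono order_refl)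
qed (use assms in \<open>auto intro: pdist_xmarg F_LP_le_xmarg joint_pdist_qstar F_LP_le_qstar\<close>)

end
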